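(* Let $V$ be a $3$-dimensional real Euclidean space, $R\subset V$ a reduced root system spanning $V$ with simple system $S$ and Weyl group $W$, $\Lambda\subset C_S$ finite, and $P=\operatorname{conv}(W(\Lambda))$ a $3$-dimensional $W$-symmetric polytope. If $P$ is simple, then for every $K\subseteq S$ the quotient polytope $P/W_K=P\cap C_K$ is simple.
   Context: $W$ is generated by the reflections in the simple roots, $W_K$ by the reflections in the roots of $K$; $C_K=\{x:\langle x,\alpha\rangle\ge0\ \forall\alpha\in K\}$, and $P/W_K$ is identified with the polytope $P\cap C_K$. No non-degeneracy is assumed. A $3$-dimensional polytope is simple if each vertex lies in exactly $3$ facets. *)

theory Defs
  imports "HOL-Analysis.Analysis"
begin

definition refl_in :: "'a::euclidean_space \<Rightarrow> 'a \<Rightarrow> 'a" where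
  "refl_in a x = x - ((2 * (x \<bullet> a)) / (a \<bullet> a)) *\<^sub>R a"

definition reduced_root_system :: "'a::euclidean_space set \<Rightarrow> bool" where
  "reduced_root_system R \<longleftrightarrow>
     finite R \<and> 0 \<notin> R \<and> span R = UNIV \<and>
     (\<forall>a\<in>R. \<forall>b\<in>R. refl_in a b \<in> R) \<and>
     (\<forall>a\<in>R. \<forall>b\<in>R. 2 * (b \<bullet> a) / (a \<bullet> a) \<in> \<int>) \<and>
     (\<forall>a\<in>R. \<forall>c::real. c *\<^sub>R a \<in> R \<longrightarrow> c = 1 \<or> c = -1)"

definition simple_system :: "'a::euclidean_space set \<Rightarrow> 'a set \<Rightarrow> bool" where
  "simple_system R S \<longleftrightarrow>
     S \<subseteq> R \<and> independent S \<and>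
     (\<forall>b\<in>R. \<exists>c. b = (\<Sum>a\<in>S. c a *\<^sub>R a) \<and>
        ((\<forall>a\<in>S. c a \<ge> 0) \<or> (\<forall>a\<in>S. c a \<le> 0)))"

text \<open>The group generated by the reflections in the vectors of K (for finite
  reflection groups the generated monoid coincides with the generated group).\<close>
inductive_set refl_group :: "'a::euclidean_space set \<Rightarrow> ('a \<Rightarrow> 'a) set"
  for K :: "'a set" where
  id: "id \<in> refl_group K"
| step: "w \<in> refl_group K \<Longrightarrow> a \<in> K \<Longrightarrow> refl_in a \<circ> w \<in> refl_group K"

definition chamber :: "'a::euclidean_space set \<Rightarrow> 'a set" where
  "chamber K = {x. \<forall>a\<in>K. x \<bullet> a \<ge> 0}"

definition simple_polytope3 :: "'a::euclidean_space set \<Rightarrow> bool" where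
  "simple_polytope3 P \<longleftrightarrow> polytope P \<and> aff_dim P = 3 \<and>
     (\<forall>v. v extreme_point_of P \<longrightarrow> card {F. F facet_of P \<and> v \<in> F} = 3)"

end

(*
  Near a vertex v of Q = P \<inter> C_K, the polytope Q coincides with the cone cut out by the unit outer
  normals N of the facets of P through v and by the walls -a of the chamber, for the a in K with
  a \<bullet> v = 0. Simplicity of P makes N linearly independent, and each such reflection s_a fixes v
  and P, hence permutes N. Writing s_a n = n - c a, one of n and s_a n is a nonnegative combination
  of the other and of -a, so it can be dropped from the generators of the cone; when two walls pass
  through v, obtuseness of the simple roots makes the two reductions run in the same direction.
  So the cone at v has at most three, hence exactly three, generators, and a vertex of a 3-polytope
  at which the polytope is locally a simplicial cone lies in exactly three facets.
*)
theory Submission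
  imports Defs
begin

section \<open>Reflections\<close>

lemma refl_in_inner_self: "refl_in a x \<bullet> a = - (x \<bullet> a)"
  by (cases "a = 0") (simp_all add: refl_in_def inner_diff_left)

lemma refl_in_refl_in [simp]: "refl_in a (refl_in a x) = x"
  unfolding refl_in_def[of a "refl_in a x"] refl_in_inner_self by (simp add: refl_in_def)

lemma refl_in_eq_iff [simp]: "refl_in a x = refl_in a y \<longleftrightarrow> x = y"
  by (metis refl_in_refl_in)

lemma refl_in_image_eq:
  assumes "\<And>x. x \<in> X \<Longrightarrow> refl_in a x \<in> X"
  shows "refl_in a ` X = X"
proof
  show "refl_in a ` X \<subseteq> X"
    using assms by auto
  show "X \<subseteq> refl_in a ` X"
  proof
    fix x assume "x \<in> X"
    then show "x \<in> refl_in a ` X"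
      using assms image_eqI[of x "refl_in a" "refl_in a x"] by simp
  qed
qed

lemma refl_in_inner_commute: "refl_in a x \<bullet> y = x \<bullet> refl_in a y"
  by (simp add: refl_in_def algebra_simps inner_commute)

lemma refl_in_fixed_iff: "refl_in a x = x \<longleftrightarrow> x \<bullet> a = 0"
  by (cases "a = 0") (auto simp: refl_in_def)

lemma linear_refl_in: "linear (refl_in a)"
  by (auto simp: linear_iff refl_in_def algebra_simps add_divide_distrib diff_divide_distrib)

lemma orthogonal_transformation_refl_in: "orthogonal_transformation (refl_in a)"
  by (simp add: orthogonal_transformation linear_refl_in norm_eq_sqrt_inner
      refl_in_inner_commute)

lemma refl_in_sub_nonneg_multiple:
  obtains c where "0 \<le> c" "refl_in a x = x - c *\<^sub>R a"
  | c where "0 \<le> c" "x = refl_in a x - c *\<^sub>R a"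
proof (cases "x \<bullet> a \<ge> 0")
  case True
  then show ?thesis
    by (intro that(1)[of "2 * (x \<bullet> a) / (a \<bullet> a)"]) (simp_all add: refl_in_def)
next
  case False
  then show ?thesis
    by (intro that(2)[of "- 2 * (x \<bullet> a) / (a \<bullet> a)"])
      (simp_all add: refl_in_def divide_nonpos_nonneg)
qed

lemma refl_in_moves_some:
  assumes "span N = UNIV" "a \<noteq> 0"
  obtains n where "n \<in> N" "refl_in a n \<noteq> n"
proof -
  have "orthogonal a a" if "\<forall>n\<in>N. n \<bullet> a = 0"
    using that assms(1) by (intro orthogonal_to_span[of a N]) (auto simp: orthogonal_def inner_commute)
  then show ?thesis
    using that assms(2) by (auto simp: refl_in_fixed_iff orthogonal_def)
qed

lemma refl_in_eq_refl_in_imp_parallel: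
  assumes "refl_in a x = refl_in b x" "refl_in a x \<noteq> x"
  shows "a \<in> span {b}"
proof -
  define k where "k = 2 * (x \<bullet> a) / (a \<bullet> a)"
  define l where "l = 2 * (x \<bullet> b) / (b \<bullet> b)"
  have "k *\<^sub>R a = l *\<^sub>R b"
    using assms(1) by (simp add: refl_in_def k_def l_def)
  moreover have "k \<noteq> 0"
    using assms(2) by (auto simp: refl_in_def k_def)
  ultimately have "a = (l / k) *\<^sub>R b"
    by (metis divideR_right divide_inverse_commute scaleR_scaleR)
  then show ?thesis
    by (simp add: span_base span_scale)
qed

section \<open>Polar cones and the reduction to three generators\<close>

definition polar_cone :: "'a::real_inner set \<Rightarrow> 'a set" where
  "polar_cone M = {y. \<forall>m\<in>M. m \<bullet> y \<le> 0}"

lemma scaleR_mem_polar_cone_iff: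
  "0 < t \<Longrightarrow> t *\<^sub>R d \<in> polar_cone M \<longleftrightarrow> d \<in> polar_cone M"
  by (auto simp: polar_cone_def mult_le_0_iff)

lemma polar_cone_Un: "polar_cone (M \<union> M') = polar_cone M \<inter> polar_cone M'"
  by (auto simp: polar_cone_def)

lemma mem_polar_cone_uminus_image: "y \<in> polar_cone (uminus ` M) \<longleftrightarrow> (\<forall>m\<in>M. 0 \<le> m \<bullet> y)"
  unfolding polar_cone_def by simp

lemma polar_cone_insert_nonneg_combination:
  assumes "n \<in> M" "b \<in> M" "0 \<le> c"
  shows "polar_cone (insert (n + c *\<^sub>R b) M) = polar_cone M"
proof -
  have "(n + c *\<^sub>R b) \<bullet> y \<le> 0" if "y \<in> polar_cone M" for y
    using that assms by (auto simp: polar_cone_def inner_add_left intro!: add_nonpos_nonpos mult_nonneg_nonpos)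
  then show ?thesis
    by (auto simp: polar_cone_def)
qed

lemma polar_cone_remove_reflected:
  assumes "a \<in> J" "n \<in> N" "refl_in a n \<noteq> n" "refl_in a n \<in> N"
  obtains m where "m \<in> N" "polar_cone ((N - {m}) \<union> uminus ` J) = polar_cone (N \<union> uminus ` J)"
proof -
  have drop: "polar_cone ((N - {q}) \<union> uminus ` J) = polar_cone (N \<union> uminus ` J)"
    if "p \<in> N" "q \<in> N" "p \<noteq> q" "q = p + c *\<^sub>R (- a)" "0 \<le> c" for p q c
  proof -
    have "polar_cone (insert (p + c *\<^sub>R (- a)) ((N - {q}) \<union> uminus ` J)) =
        polar_cone ((N - {q}) \<union> uminus ` J)"
      using that assms(1) by (intro polar_cone_insert_nonneg_combination) auto
    moreover have "insert (p + c *\<^sub>R (- a)) ((N - {q}) \<union> uminus ` J) = N \<union> uminus ` J"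
      using that by auto
    ultimately show ?thesis
      by simp
  qed
  show ?thesis
  proof (cases rule: refl_in_sub_nonneg_multiple[of a n])
    case (1 c)
    then have "polar_cone ((N - {refl_in a n}) \<union> uminus ` J) = polar_cone (N \<union> uminus ` J)"
      using assms(2-4) by (intro drop[of n _ c]) auto
    then show ?thesis
      using assms(4) by (rule that[rotated])
  next
    case (2 c)
    then have "polar_cone ((N - {n}) \<union> uminus ` J) = polar_cone (N \<union> uminus ` J)"
      using assms(2-4) by (intro drop[of "refl_in a n" _ c]) auto
    then show ?thesis
      using assms(2) by (rule that[rotated])
  qed
qed

lemma card_add_card_le_DIM_if_orthogonal:
  fixes N J :: "'a::euclidean_space set"
  assumes "independent N" "independent J" "\<And>n a. n \<in> N \<Longrightarrow> a \<in> J \<Longrightarrow> n \<bullet> a = 0"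
  shows "card N + card J \<le> DIM('a)"
proof -
  define Orth where "Orth = {y \<in> UNIV. \<forall>x\<in>span J. orthogonal x y}"
  have "dim Orth + dim (span J) = DIM('a)"
    unfolding Orth_def using dim_subspace_orthogonal_to_vectors[of "span J" UNIV]
    by simp
  moreover have "N \<subseteq> Orth"
  proof
    fix n assume n: "n \<in> N"
    have "orthogonal n x" if "x \<in> span J" for x
      by (rule orthogonal_to_span[OF that]) (simp add: orthogonal_def assms(3)[OF n])
    then show "n \<in> Orth"
      by (simp add: Orth_def orthogonal_commute)
  qed
  then have "card N \<le> dim Orth"
    using dim_subset[of N Orth] dim_eq_card_independent[OF assms(1)] by simp
  ultimately show ?thesis
    using dim_eq_card_independent[OF assms(2)] by simp
qed

lemma reflection_invariant_independent_eq_empty: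
  fixes N J :: "'a::euclidean_space set"
  assumes indN: "independent N" and "span J = UNIV"
    and inv: "\<And>a. a \<in> J \<Longrightarrow> refl_in a ` N = N"
  shows "N = {}"
proof -
  define u where "u = \<Sum>N"
  have u_orth: "u \<bullet> a = 0" if "a \<in> J" for a
  proof -
    have "refl_in a u = (\<Sum>n\<in>N. refl_in a n)"
      unfolding u_def by (rule linear_sum[OF linear_refl_in])
    also have "\<dots> = \<Sum>(refl_in a ` N)"
      by (simp add: sum.reindex inj_on_def)
    finally show ?thesis
      using inv[OF that] by (simp add: u_def refl_in_fixed_iff)
  qed
  have "orthogonal u u"
    by (rule orthogonal_to_span[of u J]) (simp_all add: assms(2) orthogonal_def u_orth)
  then have sum0: "(\<Sum>n\<in>N. n) = 0"
    by (simp add: u_def orthogonal_def)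
  have "(1::real) = 0" if "n \<in> N" for n
    using independentD[OF indN _ subset_refl, where u = "\<lambda>_. 1", of n] sum0 that
      independent_bound[OF indN] by simp
  then show ?thesis
    by auto
qed

lemma refl_in_swaps_two_fixes_one:
  fixes N :: "'a::euclidean_space set"
  assumes card: "card N = 3" and span: "span N = UNIV" and "a \<noteq> 0" and inv: "refl_in a ` N = N"
  obtains x z where "N = {x, refl_in a x, z}" "refl_in a x \<noteq> x" "z \<noteq> x" "z \<noteq> refl_in a x"
    "refl_in a z = z"
proof -
  have in_N: "refl_in a y \<in> N" if "y \<in> N" for y
    using inv that by blast
  obtain x where x: "x \<in> N" "refl_in a x \<noteq> x"
    using refl_in_moves_some[OF span \<open>a \<noteq> 0\<close>] by blast
  have "finite N"
    using card by (metis card.infinite zero_neq_numeral)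
  then have "card (N - {x, refl_in a x}) = 1"
    using card x in_N[OF x(1)] by (subst card_Diff_subset) auto
  then obtain z where z: "N - {x, refl_in a x} = {z}"
    by (rule card_1_singletonE)
  then have N: "N = {x, refl_in a x, z}" and "z \<noteq> x" "z \<noteq> refl_in a x"
    using x in_N[OF x(1)] by auto
  have "refl_in a z \<noteq> x"
    using \<open>z \<noteq> refl_in a x\<close> by (metis refl_in_refl_in)
  moreover have "refl_in a z \<noteq> refl_in a x" "refl_in a z \<in> N"
    using \<open>z \<noteq> x\<close> in_N N by auto
  ultimately have "refl_in a z = z"
    using N by blast
  then show ?thesis
    using that N x(2) \<open>z \<noteq> x\<close> \<open>z \<noteq> refl_in a x\<close> by blast
qed

lemma reflection_pair_configuration:
  fixes N :: "'a::euclidean_space set"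
  assumes card: "card N = 3" and span: "span N = UNIV"
    and inv: "refl_in \<alpha> ` N = N" "refl_in \<beta> ` N = N"
    and indep: "independent {\<alpha>, \<beta>}" and "\<alpha> \<noteq> \<beta>"
  obtains n where "N = {n, refl_in \<alpha> n, refl_in \<beta> (refl_in \<alpha> n)}" "refl_in \<alpha> n \<noteq> n"
    "refl_in \<beta> (refl_in \<alpha> n) \<bullet> \<alpha> = 0"
proof -
  have nonzero: "\<alpha> \<noteq> 0" "\<beta> \<noteq> 0"
    using indep dependent_zero by blast+
  have not_parallel: "\<alpha> \<notin> span {\<beta>}"
    using indep \<open>\<alpha> \<noteq> \<beta>\<close> by (auto simp: dependent_def insert_Diff_if)
  let ?s = "refl_in \<alpha>" and ?t = "refl_in \<beta>"
  obtain m r where N: "N = {m, ?s m, r}" and m: "?s m \<noteq> m" and r: "r \<noteq> m" "r \<noteq> ?s m" "?s r = r"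
    using refl_in_swaps_two_fixes_one[OF card span nonzero(1) inv(1)] by blast
  have t_in_N: "?t x \<in> N" if "x \<in> N" for x
    using inv(2) that by blast
  have "?t r \<noteq> r"
  proof
    assume t_r: "?t r = r"
    have "?t m \<noteq> m"
    proof
      assume "?t m = m"
      moreover have "?t (?s m) \<noteq> m" "?t (?s m) \<noteq> r"
        using \<open>?t m = m\<close> m t_r r(2) by (metis refl_in_eq_iff)+
      then have "?t (?s m) = ?s m"
        using t_in_N[of "?s m"] N by auto
      ultimately have "\<forall>n\<in>N. ?t n = n"
        using t_r N by auto
      then show False
        using refl_in_moves_some[OF span nonzero(2)] by metis
    qed
    moreover have "?t m \<noteq> r"
      using t_r r(1) by (metis refl_in_eq_iff)
    ultimately have "?t m = ?s m"
      using t_in_N[of m] N by auto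
    then show False
      using refl_in_eq_refl_in_imp_parallel[of \<alpha> m \<beta>] m not_parallel by auto
  qed
  then consider "?t r = ?s m" | "?t r = m"
    using t_in_N[of r] N by blast
  then show ?thesis
  proof cases
    case 1
    then have "?t (?s m) = r"
      by (metis refl_in_refl_in)
    then show ?thesis
      using that[of m] N m r by (simp add: refl_in_fixed_iff)
  next
    case 2
    then have "?t (?s (?s m)) = r"
      by (metis refl_in_refl_in)
    then show ?thesis
      using that[of "?s m"] N m r by (auto simp: refl_in_fixed_iff insert_commute)
  qed
qed

lemma polar_cone_reflection_chain:
  assumes obtuse: "\<alpha> \<bullet> \<beta> \<le> 0" and moved: "refl_in \<alpha> n \<noteq> n"
    and fixed: "refl_in \<beta> (refl_in \<alpha> n) \<bullet> \<alpha> = 0"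
  obtains g where "polar_cone {n, refl_in \<alpha> n, refl_in \<beta> (refl_in \<alpha> n), -\<alpha>, -\<beta>} =
    polar_cone {g, -\<alpha>, -\<beta>}"
proof -
  define m where "m = refl_in \<alpha> n"
  define p where "p = refl_in \<beta> m"
  define c where "c = 2 * (n \<bullet> \<alpha>) / (\<alpha> \<bullet> \<alpha>)"
  define d where "d = 2 * (m \<bullet> \<beta>) / (\<beta> \<bullet> \<beta>)"
  have m: "m = n + c *\<^sub>R (- \<alpha>)" and p: "p = m + d *\<^sub>R (- \<beta>)"
    by (simp_all add: m_def p_def c_def d_def refl_in_def)
  have "p \<bullet> \<alpha> = 0"
    using fixed by (simp add: p_def m_def)
  then have "p \<bullet> n = p \<bullet> m"
    by (simp add: m inner_diff_right)
  moreover have "m \<bullet> m = n \<bullet> n"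
    by (simp add: m_def refl_in_inner_commute)
  \<comment> \<open>This is where obtuseness enters: \<open>c d (\<alpha> \<bullet> \<beta>) = -|n - m|\<^sup>2/2 < 0\<close> forces \<open>c\<close>, \<open>d\<close> to have equal signs.\<close>
  ultimately have "(n - m) \<bullet> (m - p) = - ((n - m) \<bullet> (n - m)) / 2"
    by (simp add: inner_diff_left inner_diff_right inner_commute)
  also have "\<dots> < 0"
    using moved by (simp add: m_def)
  also have "(n - m) \<bullet> (m - p) = c * d * (\<alpha> \<bullet> \<beta>)"
    by (simp add: m p)
  finally have "0 < c * d"
    using obtuse by (meson mult_nonpos_nonpos not_le)
  then consider "0 \<le> c" "0 \<le> d" | "c \<le> 0" "d \<le> 0"
    by (auto simp: zero_less_mult_iff)
  then show ?thesis
  proof cases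
    case 1
    have "polar_cone {n, m, p, -\<alpha>, -\<beta>} = polar_cone (insert p (insert m {n, -\<alpha>, -\<beta>}))"
      by (simp add: insert_commute)
    also have "\<dots> = polar_cone (insert m {n, -\<alpha>, -\<beta>})"
      unfolding p using 1 by (intro polar_cone_insert_nonneg_combination) auto
    also have "\<dots> = polar_cone {n, -\<alpha>, -\<beta>}"
      unfolding m using 1 by (intro polar_cone_insert_nonneg_combination) auto
    finally show ?thesis
      unfolding p_def m_def by (rule that)
  next
    case 2
    have n: "n = m + (- c) *\<^sub>R (- \<alpha>)" and m': "m = p + (- d) *\<^sub>R (- \<beta>)"
      by (simp_all add: m p)
    have "polar_cone {n, m, p, -\<alpha>, -\<beta>} = polar_cone {m, p, -\<alpha>, -\<beta>}"
      unfolding n using 2 by (intro polar_cone_insert_nonneg_combination) auto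
    also have "\<dots> = polar_cone {p, -\<alpha>, -\<beta>}"
      unfolding m' using 2 by (intro polar_cone_insert_nonneg_combination) auto
    finally show ?thesis
      unfolding p_def m_def by (rule that)
  qed
qed

lemma polar_cone_remove_redundant_normal:
  fixes N J :: "'a::euclidean_space set"
  assumes "independent N" "independent J" "DIM('a) < card N + card J"
    and inv: "\<And>a. a \<in> J \<Longrightarrow> refl_in a ` N = N"
  obtains m where "m \<in> N" "polar_cone ((N - {m}) \<union> uminus ` J) = polar_cone (N \<union> uminus ` J)"
proof -
  have "\<exists>a\<in>J. \<exists>n\<in>N. refl_in a n \<noteq> n"
  proof (rule ccontr)
    assume "\<not> ?thesis"
    then have "card N + card J \<le> DIM('a)"
      using assms(1,2) by (intro card_add_card_le_DIM_if_orthogonal) (auto simp: refl_in_fixed_iff)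
    then show False
      using assms(3) by simp
  qed
  then obtain a n where "a \<in> J" "n \<in> N" "refl_in a n \<noteq> n"
    by blast
  moreover have "refl_in a n \<in> N"
    using inv[OF \<open>a \<in> J\<close>] \<open>n \<in> N\<close> by blast
  ultimately show ?thesis
    using polar_cone_remove_reflected that by blast
qed

lemma polar_cone_two_walls:
  fixes N :: "'a::euclidean_space set"
  assumes "card N = 3" "span N = UNIV" "refl_in \<alpha> ` N = N" "refl_in \<beta> ` N = N"
    and "independent {\<alpha>, \<beta>}" "\<alpha> \<noteq> \<beta>" "\<alpha> \<bullet> \<beta> \<le> 0"
  obtains g where "polar_cone (N \<union> uminus ` {\<alpha>, \<beta>}) = polar_cone {g, -\<alpha>, -\<beta>}"
proof -
  obtain n where N: "N = {n, refl_in \<alpha> n, refl_in \<beta> (refl_in \<alpha> n)}"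
    and "refl_in \<alpha> n \<noteq> n" "refl_in \<beta> (refl_in \<alpha> n) \<bullet> \<alpha> = 0"
    using reflection_pair_configuration[OF assms(1-6)] by blast
  then obtain g where
    "polar_cone {n, refl_in \<alpha> n, refl_in \<beta> (refl_in \<alpha> n), -\<alpha>, -\<beta>} = polar_cone {g, -\<alpha>, -\<beta>}"
    using polar_cone_reflection_chain[OF \<open>\<alpha> \<bullet> \<beta> \<le> 0\<close>] by blast
  moreover have "N \<union> uminus ` {\<alpha>, \<beta>} = {n, refl_in \<alpha> n, refl_in \<beta> (refl_in \<alpha> n), -\<alpha>, -\<beta>}"
    using N by auto
  ultimately show ?thesis
    using that by simp
qed

lemma polar_cone_eq_three_generators:
  fixes N J :: "'a::euclidean_space set"
  assumes dim: "DIM('a) = 3" and indN: "independent N" and indJ: "independent J"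
    and obtuse: "\<And>a b. a \<in> J \<Longrightarrow> b \<in> J \<Longrightarrow> a \<noteq> b \<Longrightarrow> a \<bullet> b \<le> 0"
    and inv: "\<And>a. a \<in> J \<Longrightarrow> refl_in a ` N = N"
  obtains G where "finite G" "card G \<le> 3" "polar_cone G = polar_cone (N \<union> uminus ` J)"
proof -
  have N: "finite N" "card N \<le> 3" and J: "finite J" "card J \<le> 3"
    using independent_bound[OF indN] independent_bound[OF indJ] dim by auto
  have card_Un: "card (N' \<union> uminus ` J) \<le> card N' + card J" for N'
    using card_Un_le[of N' "uminus ` J"] card_image_le[OF J(1), of uminus] by linarith
  have span_if_card: "span X = UNIV" if "independent X" "card X = 3" for X :: "'a set"
    using card_eq_dim[of X UNIV] that dim independent_bound[OF that(1)] by auto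
  have "N = {}" if "card J = 3"
    using reflection_invariant_independent_eq_empty[OF indN span_if_card[OF indJ that] inv] .
  then consider "card N + card J \<le> 3" | "card N + card J = 4" | "card N = 3" "card J = 2"
    using N J by fastforce
  then show ?thesis
  proof cases
    case 1
    then show ?thesis
      using card_Un[of N] N(1) J(1) by (intro that[of "N \<union> uminus ` J"]) simp_all
  next
    case 2
    then obtain m where "m \<in> N" "polar_cone ((N - {m}) \<union> uminus ` J) = polar_cone (N \<union> uminus ` J)"
      using polar_cone_remove_redundant_normal[OF indN indJ _ inv] dim by auto
    moreover have "card ((N - {m}) \<union> uminus ` J) \<le> 3"
      using card_Un[of "N - {m}"] 2 \<open>m \<in> N\<close> N(1) card_gt_0_iff[of N] by auto
    ultimately show ?thesis
      using N(1) J(1) by (intro that[of "(N - {m}) \<union> uminus ` J"]) auto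
  next
    case 3
    then obtain \<alpha> \<beta> where J_eq: "J = {\<alpha>, \<beta>}" "\<alpha> \<noteq> \<beta>"
      by (auto simp: card_2_iff)
    moreover have "refl_in \<alpha> ` N = N" "refl_in \<beta> ` N = N" "independent {\<alpha>, \<beta>}" "\<alpha> \<bullet> \<beta> \<le> 0"
      using J_eq inv indJ obtuse by auto
    ultimately obtain g where "polar_cone (N \<union> uminus ` J) = polar_cone {g, -\<alpha>, -\<beta>}"
      using polar_cone_two_walls[OF 3(1) span_if_card[OF indN 3(1)]] by metis
    moreover have "card {g, -\<alpha>, -\<beta>} \<le> 3"
      by (auto simp: card_insert_if)
    ultimately show ?thesis
      using that[of "{g, -\<alpha>, -\<beta>}"] by simp
  qed
qed

section \<open>Local cones\<close>

definition local_cone :: "'a::real_inner set \<Rightarrow> 'a \<Rightarrow> 'a set \<Rightarrow> bool" where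
  "local_cone Q v M \<longleftrightarrow> (\<forall>\<^sub>F y in nhds v. y \<in> Q \<longleftrightarrow> y - v \<in> polar_cone M)"

lemma local_cone_along_ray:
  assumes "local_cone Q v M"
  shows "\<forall>\<^sub>F t in at_right 0. v + t *\<^sub>R d \<in> Q \<longleftrightarrow> d \<in> polar_cone M"
proof -
  have "((\<lambda>t. v + t *\<^sub>R d) \<longlongrightarrow> v) (at_right 0)"
    by (auto intro!: tendsto_eq_intros)
  from eventually_compose_filterlim[OF assms[unfolded local_cone_def] this]
  have "\<forall>\<^sub>F t in at_right 0. v + t *\<^sub>R d \<in> Q \<longleftrightarrow> t *\<^sub>R d \<in> polar_cone M"
    by simp
  with eventually_at_right_less[of 0] show ?thesis
    by eventually_elim (simp add: scaleR_mem_polar_cone_iff)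
qed

lemma local_cone_subset_polar_cone:
  assumes "convex Q" "v \<in> Q" "local_cone Q v M" "x \<in> Q"
  shows "x - v \<in> polar_cone M"
proof -
  obtain t where "t \<in> {0<..<1}" "v + t *\<^sub>R (x - v) \<in> Q \<longleftrightarrow> x - v \<in> polar_cone M"
    using eventually_happens'[OF trivial_limit_at_right_real eventually_conj[OF
        eventually_at_right_real[of 0 1] local_cone_along_ray[OF assms(3), of "x - v"]]]
    by auto
  moreover have "v + t *\<^sub>R (x - v) = (1 - t) *\<^sub>R v + t *\<^sub>R x"
    by (simp add: algebra_simps)
  ultimately show ?thesis
    using convexD[OF assms(1,2,4), of "1 - t" t] by auto
qed

lemma span_eq_UNIV_if_local_cone:
  fixes Q :: "'a::euclidean_space set"
  assumes "v extreme_point_of Q" "local_cone Q v M"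
  shows "span M = UNIV"
proof (rule ccontr)
  assume "span M \<noteq> UNIV"
  then obtain a where "a \<noteq> 0" and a: "\<forall>x\<in>span M. a \<bullet> x = 0"
    using span_not_UNIV_orthogonal by blast
  have "m \<bullet> a = 0" if "m \<in> M" for m
    using a span_base[OF that] by (metis inner_commute)
  then have "a \<in> polar_cone M" "- a \<in> polar_cone M"
    by (simp_all add: polar_cone_def)
  then obtain t where "0 < t" "v + t *\<^sub>R a \<in> Q" "v + t *\<^sub>R (- a) \<in> Q"
    using eventually_happens'[OF trivial_limit_at_right_real eventually_conj[OF
        eventually_at_right_less[of 0] eventually_conj[OF
          local_cone_along_ray[OF assms(2), of a] local_cone_along_ray[OF assms(2), of "- a"]]]]
    by auto
  moreover have "v \<in> open_segment (v + t *\<^sub>R (- a)) (v + t *\<^sub>R a)"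
  proof -
    have "v + t *\<^sub>R (- a) \<noteq> v + t *\<^sub>R a"
      using \<open>0 < t\<close> \<open>a \<noteq> 0\<close> by (simp add: neg_eq_iff_add_eq_0 flip: scaleR_add_left)
    moreover have "v = midpoint (v + t *\<^sub>R (- a)) (v + t *\<^sub>R a)"
      by (simp add: midpoint_def scaleR_2)
    ultimately show ?thesis
      using midpoint_in_open_segment by metis
  qed
  ultimately show False
    using assms(1) by (auto simp: extreme_point_of_def)
qed

section \<open>Facets at a simplicial vertex\<close>

lemma exists_inner_eq_on_independent:
  fixes G :: "'a::euclidean_space set"
  assumes "independent G"
  obtains y where "\<And>g. g \<in> G \<Longrightarrow> g \<bullet> y = c g"
proof -
  obtain f :: "'a \<Rightarrow> real" where f: "linear f" "\<And>g. g \<in> G \<Longrightarrow> f g = c g"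
    using linear_independent_extend[OF assms] by blast
  have "g \<bullet> adjoint f 1 = f g" for g
    using adjoint_works[OF f(1), of g 1] by simp
  then show ?thesis
    using f(2) that by metis
qed

text \<open>\<open>p g\<close> lies on the edge of the cone at \<open>v\<close> along which every wall except that of \<open>g\<close> stays tight.\<close>

definition edge_points :: "'a::real_inner set \<Rightarrow> 'a \<Rightarrow> 'a set \<Rightarrow> ('a \<Rightarrow> 'a) \<Rightarrow> bool" where
  "edge_points Q v G p \<longleftrightarrow>
    (\<forall>g\<in>G. p g \<in> Q \<and> g \<bullet> (p g - v) < 0 \<and> (\<forall>h\<in>G. h \<noteq> g \<longrightarrow> h \<bullet> (p g - v) = 0))"

lemma local_cone_edge_points:
  fixes Q :: "'a::euclidean_space set"
  assumes cone: "local_cone Q v G" and indep: "independent G"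
  obtains p where "edge_points Q v G p"
proof -
  have "\<exists>y. \<forall>h\<in>G. h \<bullet> y = (if h = g then -1 else 0)" for g
    by (rule exists_inner_eq_on_independent[OF indep, where c = "\<lambda>h. if h = g then -1 else 0"])
      blast
  then obtain w where w: "\<And>g h. h \<in> G \<Longrightarrow> h \<bullet> w g = (if h = g then -1 else 0)"
    by metis
  then have "w g \<in> polar_cone G" for g
    by (simp add: polar_cone_def)
  then have "\<forall>\<^sub>F t in at_right 0. v + t *\<^sub>R w g \<in> Q" for g
    using local_cone_along_ray[OF cone, of "w g"] by simp
  then have "\<forall>\<^sub>F t in at_right 0. \<forall>g\<in>G. v + t *\<^sub>R w g \<in> Q"
    using independent_bound[OF indep] by (intro eventually_ball_finite) auto
  then obtain t where "0 < t" and t: "\<And>g. g \<in> G \<Longrightarrow> v + t *\<^sub>R w g \<in> Q"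
    using eventually_happens'[OF trivial_limit_at_right_real
        eventually_conj[OF eventually_at_right_less[of 0]]] by blast
  show ?thesis
    by (rule that[of "\<lambda>g. v + t *\<^sub>R w g"]) (use t w \<open>0 < t\<close> in \<open>auto simp: edge_points_def\<close>)
qed

lemma aff_dim_insert_biorthogonal:
  fixes v :: "'a::euclidean_space"
  assumes "finite G" and diag: "\<And>g. g \<in> G \<Longrightarrow> g \<bullet> (p g - v) \<noteq> 0"
    and off_diag: "\<And>g g'. g \<in> G \<Longrightarrow> g' \<in> G \<Longrightarrow> g' \<noteq> g \<Longrightarrow> g' \<bullet> (p g - v) = 0"
  shows "aff_dim (insert v (p ` G)) = int (card G)"
proof -
  have inj: "inj_on p G"
    using diag off_diag by (metis inj_onI)
  have notin: "v \<notin> p ` G"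
    using diag by (metis diff_self image_iff inner_zero_right)
  have "independent ((\<lambda>g. p g - v) ` G)"
    unfolding dependent_def
  proof clarsimp
    fix g assume g: "g \<in> G" and "p g - v \<in> span ((\<lambda>g. p g - v) ` G - {p g - v})"
    moreover have "span ((\<lambda>g. p g - v) ` G - {p g - v}) \<subseteq> {x. g \<bullet> x = 0}"
      using off_diag g by (intro span_minimal subspace_hyperplane) auto
    ultimately show False
      using diag g by auto
  qed
  moreover have "(\<lambda>x. - v + x) ` p ` G = (\<lambda>g. p g - v) ` G"
    by (auto simp: image_iff)
  ultimately have "\<not> affine_dependent (insert v (p ` G))"
    by (simp add: affine_dependent_iff_dependent[OF notin])
  then have "int (card (insert v (p ` G))) = aff_dim (insert v (p ` G)) + 1"
    by (rule aff_dim_affine_independent)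
  moreover have "card (insert v (p ` G)) = card G + 1"
    using notin inj \<open>finite G\<close> by (simp add: card_image)
  ultimately show ?thesis
    by simp
qed

lemma aff_dim_insert_edge_points:
  fixes v :: "'a::euclidean_space"
  assumes edges: "edge_points Q v G p" and "H \<subseteq> G" "finite H"
  shows "aff_dim (insert v (p ` H)) = int (card H)"
proof (rule aff_dim_insert_biorthogonal[OF \<open>finite H\<close>])
  show "g \<bullet> (p g - v) \<noteq> 0" if "g \<in> H" for g
    using edges that \<open>H \<subseteq> G\<close> by (force simp: edge_points_def)
  show "h \<bullet> (p g - v) = 0" if "g \<in> H" "h \<in> H" "h \<noteq> g" for g h
    using edges that \<open>H \<subseteq> G\<close> by (auto simp: edge_points_def)
qed

lemma aff_dim_eq_DIM_if_edge_points:
  fixes Q :: "'a::euclidean_space set"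
  assumes "v \<in> Q" and edges: "edge_points Q v G p" and "finite G" "card G = DIM('a)"
  shows "aff_dim Q = DIM('a)"
proof -
  have "aff_dim (insert v (p ` G)) \<le> aff_dim Q"
    using assms(1) edges by (intro aff_dim_subset) (auto simp: edge_points_def)
  then show ?thesis
    using aff_dim_insert_edge_points[OF edges subset_refl \<open>finite G\<close>] \<open>card G = DIM('a)\<close>
      aff_dim_le_DIM[of Q] by simp
qed

lemma tight_face_facet_of:
  fixes Q :: "'a::euclidean_space set"
  assumes "convex Q" "v \<in> Q" and cone: "\<And>x. x \<in> Q \<Longrightarrow> x - v \<in> polar_cone G"
    and edges: "edge_points Q v G p" and "finite G" "card G = DIM('a)" "g \<in> G"
  shows "Q \<inter> {x. g \<bullet> x = g \<bullet> v} facet_of Q"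
proof -
  let ?F = "Q \<inter> {x. g \<bullet> x = g \<bullet> v}"
  have aff_Q: "aff_dim Q = DIM('a)"
    using aff_dim_eq_DIM_if_edge_points[OF \<open>v \<in> Q\<close> edges \<open>finite G\<close> \<open>card G = DIM('a)\<close>] .
  have "g \<bullet> x \<le> g \<bullet> v" if "x \<in> Q" for x
    using cone[OF that] \<open>g \<in> G\<close> by (auto simp: polar_cone_def inner_diff_right)
  then have face: "?F face_of Q"
    by (intro face_of_Int_supporting_hyperplane_le \<open>convex Q\<close>)
  have "p g \<in> Q" "p g \<notin> ?F"
    using edges \<open>g \<in> G\<close> by (auto simp: edge_points_def inner_diff_right)
  then have "aff_dim ?F < DIM('a)"
    using face_of_aff_dim_lt[OF \<open>convex Q\<close> face] aff_Q by auto
  moreover have "insert v (p ` (G - {g})) \<subseteq> ?F"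
    using edges \<open>v \<in> Q\<close> \<open>g \<in> G\<close> by (auto simp: edge_points_def inner_diff_right)
  then have "aff_dim (insert v (p ` (G - {g}))) \<le> aff_dim ?F"
    by (rule aff_dim_subset)
  moreover have "card (G - {g}) = DIM('a) - 1"
    using assms(5-7) by simp
  ultimately show ?thesis
    using face aff_dim_insert_edge_points[OF edges, of "G - {g}"] aff_Q \<open>v \<in> Q\<close> \<open>finite G\<close>
      DIM_positive[where 'a='a] by (auto simp: facet_of_def)
qed

lemma edge_points_coeff_nonneg:
  fixes Q :: "'a::euclidean_space set"
  assumes edges: "edge_points Q v G p" and "finite G" "g \<in> G"
    and le: "\<And>x. x \<in> Q \<Longrightarrow> (\<Sum>h\<in>G. l h *\<^sub>R h) \<bullet> (x - v) \<le> 0"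
  shows "0 \<le> l g"
proof -
  have "p g \<in> Q" "g \<bullet> (p g - v) < 0" and off: "\<And>h. h \<in> G - {g} \<Longrightarrow> h \<bullet> (p g - v) = 0"
    using edges \<open>g \<in> G\<close> by (auto simp: edge_points_def)
  have "(\<Sum>h\<in>G. l h *\<^sub>R h) \<bullet> (p g - v) = l g * (g \<bullet> (p g - v)) + (\<Sum>h\<in>G - {g}. l h * (h \<bullet> (p g - v)))"
    unfolding inner_sum_left inner_scaleR_left using \<open>finite G\<close> \<open>g \<in> G\<close> by (rule sum.remove)
  also have "(\<Sum>h\<in>G - {g}. l h * (h \<bullet> (p g - v))) = 0"
    using off by simp
  finally show ?thesis
    using le[OF \<open>p g \<in> Q\<close>] \<open>g \<bullet> (p g - v) < 0\<close> by (simp add: mult_le_0_iff)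
qed

lemma facet_of_subset_eq:
  assumes "F facet_of S" "F' facet_of S" "F \<subseteq> F'"
  shows "F = F'"
proof (rule ccontr)
  assume "F \<noteq> F'"
  moreover have "F face_of F'"
    using assms by (meson face_of_subset facet_of_imp_face_of facet_of_imp_subset)
  ultimately have "aff_dim F < aff_dim F'"
    using assms(2) by (meson face_of_aff_dim_lt face_of_imp_convex facet_of_imp_face_of)
  then show False
    using assms(1,2) by (simp add: facet_of_def)
qed

lemma facet_through_vertex_subset_tight_face:
  fixes Q :: "'a::euclidean_space set"
  assumes "polyhedron Q" "Fc facet_of Q" "v \<in> Fc" "finite G" "span G = UNIV"
    and cone: "\<And>x. x \<in> Q \<Longrightarrow> x - v \<in> polar_cone G" and edges: "edge_points Q v G p"
  obtains g where "g \<in> G" "Fc \<subseteq> {x. g \<bullet> x = g \<bullet> v}"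
proof -
  obtain a b where "a \<noteq> 0" and Q: "Q \<subseteq> {x. a \<bullet> x \<le> b}" and Fc: "Fc = Q \<inter> {x. a \<bullet> x = b}"
    using facet_of_polyhedron[OF assms(1,2)] by blast
  have "a \<in> span G"
    using \<open>span G = UNIV\<close> by simp
  then obtain l where a: "a = (\<Sum>h\<in>G. l h *\<^sub>R h)"
    unfolding span_finite[OF \<open>finite G\<close>] by blast
  have "a \<bullet> v = b"
    using \<open>v \<in> Fc\<close> Fc by simp
  then have "a \<bullet> (x - v) \<le> 0" if "x \<in> Q" for x
    using that Q by (auto simp: inner_diff_right)
  then have l_nonneg: "0 \<le> l h" if "h \<in> G" for h
    using edge_points_coeff_nonneg[OF edges \<open>finite G\<close> that] a by blast
  obtain g where "g \<in> G" "l g \<noteq> 0"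
    using a \<open>a \<noteq> 0\<close> by (metis (no_types, lifting) scale_eq_0_iff sum.neutral)
  have "g \<bullet> (v - x) = 0" if "x \<in> Fc" for x
  proof -
    have "x \<in> Q"
      using \<open>x \<in> Fc\<close> Fc by simp
    have "(\<Sum>h\<in>G. l h * (h \<bullet> (v - x))) = a \<bullet> (v - x)"
      by (simp add: a inner_sum_left)
    also have "\<dots> = 0"
      using that Fc \<open>a \<bullet> v = b\<close> by (simp add: inner_diff_right)
    finally have "(\<Sum>h\<in>G. l h * (h \<bullet> (v - x))) = 0" .
    moreover have "0 \<le> l h * (h \<bullet> (v - x))" if "h \<in> G" for h
    proof -
      have "h \<bullet> (x - v) \<le> 0"
        using cone[OF \<open>x \<in> Q\<close>] that unfolding polar_cone_def by blast
      then have "0 \<le> h \<bullet> (v - x)"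
        by (simp add: inner_diff_right)
      then show ?thesis
        using l_nonneg[OF that] by (rule mult_nonneg_nonneg[rotated])
    qed
    ultimately have "\<forall>h\<in>G. l h * (h \<bullet> (v - x)) = 0"
      by (simp add: sum_nonneg_eq_0_iff[OF \<open>finite G\<close>])
    then have "l g * (g \<bullet> (v - x)) = 0"
      using \<open>g \<in> G\<close> by (rule bspec)
    then show ?thesis
      using \<open>l g \<noteq> 0\<close> by simp
  qed
  then have "Fc \<subseteq> {x. g \<bullet> x = g \<bullet> v}"
    by (force simp: inner_diff_right)
  then show ?thesis
    by (rule that[OF \<open>g \<in> G\<close>])
qed

lemma facets_at_simplicial_vertex:
  fixes Q :: "'a::euclidean_space set"
  assumes poly: "polyhedron Q" and "v \<in> Q" and cone: "local_cone Q v G"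
    and indep: "independent G" and card: "card G = DIM('a)"
  shows "card {F. F facet_of Q \<and> v \<in> F} = DIM('a) \<and> aff_dim Q = DIM('a)"
proof -
  have "finite G"
    using independent_bound[OF indep] by blast
  have "span G = UNIV"
    using card_eq_dim[of G UNIV] indep card \<open>finite G\<close> by auto
  have "convex Q"
    using poly by (rule polyhedron_imp_convex)
  have in_cone: "x - v \<in> polar_cone G" if "x \<in> Q" for x
    using local_cone_subset_polar_cone[OF \<open>convex Q\<close> \<open>v \<in> Q\<close> cone that] .
  obtain p where edges: "edge_points Q v G p"
    using local_cone_edge_points[OF cone indep] .
  define F where "F g = Q \<inter> {x. g \<bullet> x = g \<bullet> v}" for g
  have F_facet: "F g facet_of Q" if "g \<in> G" for g
    unfolding F_def using tight_face_facet_of[OF \<open>convex Q\<close> \<open>v \<in> Q\<close> in_cone edges \<open>finite G\<close> card that] .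
  have "{Fc. Fc facet_of Q \<and> v \<in> Fc} = F ` G"
  proof (intro subset_antisym subsetI)
    fix Fc assume "Fc \<in> {Fc. Fc facet_of Q \<and> v \<in> Fc}"
    then have Fc: "Fc facet_of Q" "v \<in> Fc"
      by auto
    obtain g where "g \<in> G" "Fc \<subseteq> {x. g \<bullet> x = g \<bullet> v}"
      using facet_through_vertex_subset_tight_face[OF poly Fc \<open>finite G\<close> \<open>span G = UNIV\<close> in_cone edges] .
    then have "Fc \<subseteq> F g"
      using facet_of_imp_subset[OF Fc(1)] by (auto simp: F_def)
    then have "Fc = F g"
      using Fc(1) F_facet[OF \<open>g \<in> G\<close>] by (intro facet_of_subset_eq)
    then show "Fc \<in> F ` G"
      using \<open>g \<in> G\<close> by blast
  qed (use F_facet \<open>v \<in> Q\<close> in \<open>auto simp: F_def\<close>)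
  moreover have "inj_on F G"
  proof (rule inj_onI)
    fix g h assume "g \<in> G" "h \<in> G" "F g = F h"
    then have "p h \<in> F g \<longleftrightarrow> p h \<in> F h"
      by simp
    then show "g = h"
      using edges \<open>g \<in> G\<close> \<open>h \<in> G\<close> by (auto simp: edge_points_def F_def inner_diff_right)
  qed
  ultimately show ?thesis
    using card aff_dim_eq_DIM_if_edge_points[OF \<open>v \<in> Q\<close> edges \<open>finite G\<close> card]
    by (simp add: card_image)
qed

section \<open>Facet normals\<close>

definition facet_normals :: "'a::euclidean_space set \<Rightarrow> 'a \<Rightarrow> 'a set" where
  "facet_normals P v =
    {n. norm n = 1 \<and> (\<forall>x\<in>P. n \<bullet> x \<le> n \<bullet> v) \<and> P \<inter> {x. n \<bullet> x = n \<bullet> v} facet_of P}"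

lemma affine_hull_facet_eq_hyperplane:
  fixes P :: "'a::euclidean_space set"
  assumes "F facet_of P" "aff_dim P = DIM('a)" "F \<subseteq> {x. a \<bullet> x = b}" "a \<noteq> 0"
  shows "affine hull F = {x. a \<bullet> x = b}"
proof (rule affine_dim_equal)
  show "affine hull F \<subseteq> {x. a \<bullet> x = b}"
    using assms(3) by (intro hull_minimal) (auto simp: affine_hyperplane)
  show "aff_dim (affine hull F) = aff_dim {x. a \<bullet> x = b}"
    using assms by (simp add: facet_of_def)
qed (use assms(1) in \<open>auto simp: affine_hyperplane facet_of_def\<close>)

lemma unit_vectors_same_orthogonal_eq:
  fixes n n' :: "'a::real_inner"
  assumes "n \<bullet> n = 1" "n' \<bullet> n' = 1" and perp: "\<And>d. n \<bullet> d = 0 \<Longrightarrow> n' \<bullet> d = 0"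
  shows "n' = n \<or> n' = - n"
proof -
  define d where "d = n' - (n' \<bullet> n) *\<^sub>R n"
  have "n \<bullet> d = 0"
    using assms(1) by (simp add: d_def inner_diff_right inner_commute)
  then have "d \<bullet> d = 0"
    using perp[of d] by (simp add: d_def inner_diff_left)
  then have n': "n' = (n' \<bullet> n) *\<^sub>R n"
    by (simp add: d_def)
  then have "(n' \<bullet> n)\<^sup>2 = 1"
    using assms(1,2) by (metis inner_scaleR_left inner_scaleR_right mult.assoc mult_1_right power2_eq_square)
  then show ?thesis
    using n' by (auto simp: power2_eq_1_iff)
qed

lemma facet_normals_eqI:
  fixes P :: "'a::euclidean_space set"
  assumes affP: "aff_dim P = DIM('a)" and n: "n \<in> facet_normals P v" and n': "n' \<in> facet_normals P v"
    and same: "P \<inter> {x. n \<bullet> x = n \<bullet> v} = P \<inter> {x. n' \<bullet> x = n' \<bullet> v}"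
  shows "n = n'"
proof -
  let ?F = "P \<inter> {x. n \<bullet> x = n \<bullet> v}"
  have "?F facet_of P"
    using n by (simp add: facet_normals_def)
  have unit: "n \<bullet> n = 1" "n' \<bullet> n' = 1"
    using n n' by (simp_all add: facet_normals_def dot_square_norm)
  then have "n \<noteq> 0" "n' \<noteq> 0"
    by auto
  have "{x. n \<bullet> x = n \<bullet> v} = {x. n' \<bullet> x = n' \<bullet> v}"
    using affine_hull_facet_eq_hyperplane[OF \<open>?F facet_of P\<close> affP _ \<open>n \<noteq> 0\<close>]
      affine_hull_facet_eq_hyperplane[OF \<open>?F facet_of P\<close> affP _ \<open>n' \<noteq> 0\<close>] same
    by auto
  then have "n' \<bullet> d = 0" if "n \<bullet> d = 0" for d
    using that by (auto simp: inner_add_right dest!: eqset_imp_iff[where x = "v + d"])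
  then have "n' = n \<or> n' = - n"
    using unit by (intro unit_vectors_same_orthogonal_eq)
  moreover have "n' \<noteq> - n"
  proof
    assume "n' = - n"
    then have "P \<subseteq> {x. n \<bullet> x = n \<bullet> v}"
      using n n' by (force simp: facet_normals_def)
    then have "aff_dim P \<le> aff_dim {x. n \<bullet> x = n \<bullet> v}"
      by (rule aff_dim_subset)
    then show False
      using affP \<open>n \<noteq> 0\<close> DIM_positive[where 'a='a] by simp
  qed
  ultimately show ?thesis
    by simp
qed

lemma unit_normal_mem_facet_normals:
  assumes "a \<noteq> 0" "P \<subseteq> {x. a \<bullet> x \<le> a \<bullet> v}" "P \<inter> {x. a \<bullet> x = a \<bullet> v} facet_of P"
  shows "a /\<^sub>R norm a \<in> facet_normals P v"
proof -
  have "(a /\<^sub>R norm a) \<bullet> x = (a \<bullet> x) / norm a" for x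
    by (simp add: divide_inverse_commute)
  then show ?thesis
    using assms by (auto simp: facet_normals_def divide_right_mono)
qed

lemma bij_betw_facet_normals:
  fixes P :: "'a::euclidean_space set"
  assumes "polyhedron P" "aff_dim P = DIM('a)" "v \<in> P"
  shows "bij_betw (\<lambda>n. P \<inter> {x. n \<bullet> x = n \<bullet> v}) (facet_normals P v) {F. F facet_of P \<and> v \<in> F}"
proof (rule bij_betw_imageI)
  show "inj_on (\<lambda>n. P \<inter> {x. n \<bullet> x = n \<bullet> v}) (facet_normals P v)"
    using facet_normals_eqI[OF assms(2)] by (meson inj_onI)
  show "(\<lambda>n. P \<inter> {x. n \<bullet> x = n \<bullet> v}) ` facet_normals P v = {F. F facet_of P \<and> v \<in> F}"
  proof (intro subset_antisym subsetI)
    fix F assume "F \<in> {F. F facet_of P \<and> v \<in> F}"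
    then have F: "F facet_of P" "v \<in> F"
      by auto
    obtain a b where "a \<noteq> 0" "P \<subseteq> {x. a \<bullet> x \<le> b}" and F_eq: "F = P \<inter> {x. a \<bullet> x = b}"
      using facet_of_polyhedron[OF assms(1) F(1)] by blast
    moreover have "b = a \<bullet> v"
      using F_eq F(2) by auto
    ultimately have "a /\<^sub>R norm a \<in> facet_normals P v" "F = P \<inter> {x. (a /\<^sub>R norm a) \<bullet> x = (a /\<^sub>R norm a) \<bullet> v}"
      using F(1) unit_normal_mem_facet_normals[of a P v] by auto
    then show "F \<in> (\<lambda>n. P \<inter> {x. n \<bullet> x = n \<bullet> v}) ` facet_normals P v"
      by blast
  qed (use assms(3) in \<open>auto simp: facet_normals_def\<close>)
qed

lemma
  fixes P :: "'a::euclidean_space set"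
  assumes "polyhedron P" "aff_dim P = DIM('a)" "v \<in> P"
  shows finite_facet_normals: "finite (facet_normals P v)"
    and card_facet_normals: "card (facet_normals P v) = card {F. F facet_of P \<and> v \<in> F}"
proof -
  have "finite {F. F facet_of P \<and> v \<in> F}"
    using finite_polyhedron_faces[OF assms(1)] by (rule finite_subset[rotated]) (auto simp: facet_of_def)
  then show "finite (facet_normals P v)" "card (facet_normals P v) = card {F. F facet_of P \<and> v \<in> F}"
    using bij_betw_facet_normals[OF assms] bij_betw_finite bij_betw_same_card by blast+
qed

lemma mem_polar_cone_facet_normals_le:
  assumes "y - v \<in> polar_cone (facet_normals P v)" "a \<noteq> 0" "P \<subseteq> {x. a \<bullet> x \<le> a \<bullet> v}"
    "P \<inter> {x. a \<bullet> x = a \<bullet> v} facet_of P"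
  shows "a \<bullet> y \<le> a \<bullet> v"
proof -
  have "a /\<^sub>R norm a \<in> facet_normals P v"
    using assms(2-4) by (rule unit_normal_mem_facet_normals)
  then have "(a /\<^sub>R norm a) \<bullet> (y - v) \<le> 0"
    using assms(1) unfolding polar_cone_def by blast
  then show ?thesis
    using \<open>a \<noteq> 0\<close> by (simp add: mult_le_0_iff inner_diff_right)
qed

lemma local_cone_facet_normals:
  fixes P :: "'a::euclidean_space set"
  assumes "polyhedron P" "aff_dim P = DIM('a)" "v \<in> P"
  shows "local_cone P v (facet_normals P v)"
proof -
  obtain H where "finite H" and seq: "P = affine hull P \<inter> \<Inter>H"
    and halfspaces: "\<And>h. h \<in> H \<Longrightarrow> \<exists>a b. a \<noteq> 0 \<and> h = {x. a \<bullet> x \<le> b}"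
    and minimal: "\<And>H'. H' \<subset> H \<Longrightarrow> P \<subset> affine hull P \<inter> \<Inter>H'"
    using assms(1) by (simp add: polyhedron_Int_affine_minimal) meson
  then obtain a b where ab: "\<And>h. h \<in> H \<Longrightarrow> a h \<noteq> 0 \<and> h = {x. a h \<bullet> x \<le> b h}"
    by metis
  have P: "P = \<Inter>H"
    using seq assms(2) by (simp add: aff_dim_eq_full)
  have "\<forall>\<^sub>F y in nhds v. \<forall>h\<in>H. a h \<bullet> v < b h \<longrightarrow> a h \<bullet> y < b h"
  proof (rule eventually_ball_finite[OF \<open>finite H\<close>], rule ballI)
    fix h
    show "\<forall>\<^sub>F y in nhds v. a h \<bullet> v < b h \<longrightarrow> a h \<bullet> y < b h"
      using eventually_nhds_in_open[OF open_halfspace_lt, of v "a h" "b h"] by (cases "a h \<bullet> v < b h") auto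
  qed
  then show ?thesis
    unfolding local_cone_def
  proof eventually_elim
    case (elim y)
    show ?case
    proof
      assume "y \<in> P"
      then show "y - v \<in> polar_cone (facet_normals P v)"
        by (auto simp: polar_cone_def facet_normals_def inner_diff_right)
    next
      assume y: "y - v \<in> polar_cone (facet_normals P v)"
      have "a h \<bullet> y \<le> b h" if "h \<in> H" for h
      proof (cases "a h \<bullet> v < b h")
        case True
        then show ?thesis
          using elim that by (simp add: less_imp_le)
      next
        case False
        have h: "h = {x. a h \<bullet> x \<le> b h}" "a h \<noteq> 0"
          using ab[OF that] by auto
        have "P \<subseteq> {x. a h \<bullet> x \<le> b h}"
          using P that h(1) by blast
        then have b: "b h = a h \<bullet> v"
          using False assms(3) by auto
        have "P \<inter> {x. a h \<bullet> x = b h} facet_of P"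
          using facet_of_polyhedron_explicit[OF \<open>finite H\<close> seq ab minimal] that by blast
        then show ?thesis
          using mem_polar_cone_facet_normals_le[OF y h(2)] \<open>P \<subseteq> {x. a h \<bullet> x \<le> b h}\<close> b by simp
      qed
      then show "y \<in> P"
        using P ab by blast
    qed
  qed
qed

lemma orthogonal_transformation_facet_normals:
  fixes P :: "'a::euclidean_space set"
  assumes f: "orthogonal_transformation f" and fP: "f ` P = P" and fv: "f v = v"
  shows "f ` facet_normals P v \<subseteq> facet_normals P v"
proof
  fix m assume "m \<in> f ` facet_normals P v"
  then obtain n where n: "n \<in> facet_normals P v" and m: "m = f n"
    by blast
  have inner: "f x \<bullet> f y = x \<bullet> y" for x y
    using f unfolding orthogonal_transformation_def by blast
  have lin: "linear f" "inj f"
    using orthogonal_transformation_linear[OF f] orthogonal_transformation_inj[OF f] .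
  have "f n \<bullet> x \<le> f n \<bullet> v" if "x \<in> P" for x
  proof -
    have "x \<in> f ` P"
      using that fP by simp
    then obtain y where "x = f y" "y \<in> P"
      by (rule imageE)
    moreover have "n \<bullet> y \<le> n \<bullet> v"
      using n \<open>y \<in> P\<close> by (simp add: facet_normals_def)
    ultimately show ?thesis
      using inner[of n y] inner[of n v] fv by simp
  qed
  moreover have "P \<inter> {x. f n \<bullet> x = f n \<bullet> v} = f ` (P \<inter> {x. n \<bullet> x = n \<bullet> v})"
  proof (intro subset_antisym subsetI)
    fix x assume x: "x \<in> P \<inter> {x. f n \<bullet> x = f n \<bullet> v}"
    then have "x \<in> f ` P"
      using fP by simp
    then obtain y where "x = f y" "y \<in> P"
      by (rule imageE)
    moreover have "n \<bullet> y = n \<bullet> v"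
      using x \<open>x = f y\<close> inner[of n y] inner[of n v] fv by simp
    ultimately show "x \<in> f ` (P \<inter> {x. n \<bullet> x = n \<bullet> v})"
      by blast
  next
    fix x assume "x \<in> f ` (P \<inter> {x. n \<bullet> x = n \<bullet> v})"
    then obtain y where "y \<in> P" "n \<bullet> y = n \<bullet> v" "x = f y"
      by blast
    then show "x \<in> P \<inter> {x. f n \<bullet> x = f n \<bullet> v}"
      using fP inner[of n y] inner[of n v] fv by auto
  qed
  moreover have "f ` (P \<inter> {x. n \<bullet> x = n \<bullet> v}) facet_of P"
    using n face_of_linear_image[OF lin, of "P \<inter> {x. n \<bullet> x = n \<bullet> v}" P]
      aff_dim_injective_linear_image[OF lin] fP
    by (simp add: facet_normals_def facet_of_def)
  moreover have "norm (f n) = 1"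
    using n f by (simp add: facet_normals_def orthogonal_transformation)
  ultimately show "m \<in> facet_normals P v"
    by (simp add: facet_normals_def m)
qed

lemma refl_in_facet_normals:
  fixes P :: "'a::euclidean_space set"
  assumes "\<And>x. x \<in> P \<Longrightarrow> refl_in a x \<in> P" "v \<bullet> a = 0"
  shows "refl_in a ` facet_normals P v = facet_normals P v"
proof (rule refl_in_image_eq)
  have "refl_in a ` facet_normals P v \<subseteq> facet_normals P v"
    using refl_in_image_eq[OF assms(1)] assms(2)
    by (intro orthogonal_transformation_facet_normals orthogonal_transformation_refl_in)
      (simp_all add: refl_in_fixed_iff)
  then show "refl_in a n \<in> facet_normals P v" if "n \<in> facet_normals P v" for n
    using that by blast
qed

lemma exists_vertex_facet_normals_superset:
  fixes P :: "'a::euclidean_space set"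
  assumes poly: "polytope P" and affP: "aff_dim P = DIM('a)" and "v \<in> P"
  obtains u where "u extreme_point_of P" "facet_normals P v \<subseteq> facet_normals P u"
proof -
  let ?N = "facet_normals P v"
  have fin: "finite ?N"
    using finite_facet_normals[OF polytope_imp_polyhedron[OF poly] affP \<open>v \<in> P\<close>] .
  have le: "n \<bullet> x \<le> n \<bullet> v" if "x \<in> P" "n \<in> ?N" for x n
    using that by (simp add: facet_normals_def)
  define s where "s = \<Sum>?N"
  have s_inner: "s \<bullet> x = (\<Sum>n\<in>?N. n \<bullet> x)" for x
    by (simp add: s_def inner_sum_left)
  define T where "T = P \<inter> {x. s \<bullet> x = s \<bullet> v}"
  have face: "T face_of P"
    unfolding T_def using le
    by (intro face_of_Int_supporting_hyperplane_le polytope_imp_convex[OF poly])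
      (simp add: s_inner sum_mono)
  have tight: "n \<bullet> x = n \<bullet> v" if "x \<in> T" "n \<in> ?N" for x n
  proof -
    have "x \<in> P" "s \<bullet> x = s \<bullet> v"
      using that(1) by (simp_all add: T_def)
    then have "(\<Sum>m\<in>?N. m \<bullet> v - m \<bullet> x) = 0"
      by (simp add: s_inner sum_subtractf)
    moreover have "0 \<le> m \<bullet> v - m \<bullet> x" if "m \<in> ?N" for m
      using le[OF \<open>x \<in> P\<close> that] by simp
    ultimately have "\<forall>m\<in>?N. m \<bullet> v - m \<bullet> x = 0"
      by (simp add: sum_nonneg_eq_0_iff[OF fin])
    then show ?thesis
      using that(2) by simp
  qed
  have "polytope T"
    using face_of_polytope_polytope[OF poly face] .
  moreover have "T \<noteq> {}"
    using \<open>v \<in> P\<close> by (auto simp: T_def)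
  ultimately obtain u where "u extreme_point_of T"
    using extreme_point_exists_convex polytope_imp_compact polytope_imp_convex by blast
  then have "u extreme_point_of P" "u \<in> T"
    using extreme_point_of_face[OF face] by auto
  moreover have "?N \<subseteq> facet_normals P u"
    using tight[OF \<open>u \<in> T\<close>] by (auto simp: facet_normals_def)
  ultimately show ?thesis
    using that by blast
qed

lemma independent_facet_normals_simple_vertex:
  fixes P :: "'a::euclidean_space set"
  assumes "polyhedron P" "aff_dim P = DIM('a)" "u extreme_point_of P"
    and "card {F. F facet_of P \<and> u \<in> F} = DIM('a)"
  shows "independent (facet_normals P u)"
proof -
  have "u \<in> P"
    using assms(3) by (simp add: extreme_point_of_def)
  have "span (facet_normals P u) = UNIV"
    using span_eq_UNIV_if_local_cone[OF assms(3) local_cone_facet_normals[OF assms(1,2) \<open>u \<in> P\<close>]] .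
  moreover have "card (facet_normals P u) = DIM('a)"
    using card_facet_normals[OF assms(1,2) \<open>u \<in> P\<close>] assms(4) by simp
  ultimately show ?thesis
    using card_eq_dim[of "facet_normals P u" UNIV] finite_facet_normals[OF assms(1,2) \<open>u \<in> P\<close>]
    by simp
qed

lemma independent_facet_normals:
  fixes P :: "'a::euclidean_space set"
  assumes poly: "polytope P" and affP: "aff_dim P = DIM('a)"
    and simple: "\<And>u. u extreme_point_of P \<Longrightarrow> card {F. F facet_of P \<and> u \<in> F} = DIM('a)"
    and "v \<in> P"
  shows "independent (facet_normals P v)"
proof -
  obtain u where "u extreme_point_of P" "facet_normals P v \<subseteq> facet_normals P u"
    using exists_vertex_facet_normals_superset[OF poly affP \<open>v \<in> P\<close>] .
  then show ?thesis
    using independent_facet_normals_simple_vertex[OF polytope_imp_polyhedron[OF poly] affP]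
      simple independent_mono by blast
qed

section \<open>Chambers and simple roots\<close>

lemma polyhedron_chamber:
  fixes K :: "'a::euclidean_space set"
  assumes "finite K"
  shows "polyhedron (chamber K)"
proof -
  have "chamber K = \<Inter> ((\<lambda>a. {x. 0 \<le> a \<bullet> x}) ` K)"
    by (auto simp: chamber_def inner_commute)
  then show ?thesis
    using assms by (auto intro: polyhedron_halfspace_ge)
qed

lemma local_cone_Int_chamber:
  fixes P :: "'a::euclidean_space set"
  assumes cone: "local_cone P v N" and v: "v \<in> chamber K" and "finite K"
  shows "local_cone (P \<inter> chamber K) v (N \<union> uminus ` {a \<in> K. v \<bullet> a = 0})"
proof -
  let ?J = "{a \<in> K. v \<bullet> a = 0}"
  have "\<forall>\<^sub>F y in nhds v. \<forall>a\<in>K. 0 < a \<bullet> v \<longrightarrow> 0 < a \<bullet> y"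
  proof (rule eventually_ball_finite[OF \<open>finite K\<close>], rule ballI)
    fix a
    show "\<forall>\<^sub>F y in nhds v. 0 < a \<bullet> v \<longrightarrow> 0 < a \<bullet> y"
      using eventually_nhds_in_open[OF open_halfspace_gt, of v 0 a] by (cases "0 < a \<bullet> v") auto
  qed
  with cone show ?thesis
    unfolding local_cone_def
  proof eventually_elim
    case (elim y)
    have "y \<in> chamber K \<longleftrightarrow> (\<forall>a\<in>?J. 0 \<le> a \<bullet> (y - v))"
    proof
      show "\<forall>a\<in>?J. 0 \<le> a \<bullet> (y - v)" if "y \<in> chamber K"
        using that by (auto simp: chamber_def inner_diff_right inner_commute)
      show "y \<in> chamber K" if J: "\<forall>a\<in>?J. 0 \<le> a \<bullet> (y - v)"
        unfolding chamber_def
      proof (intro CollectI ballI)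
        fix a assume "a \<in> K"
        show "0 \<le> y \<bullet> a"
        proof (cases "v \<bullet> a = 0")
          case True
          then show ?thesis
            using J \<open>a \<in> K\<close> by (auto simp: inner_diff_right inner_commute)
        next
          case False
          then have "0 < a \<bullet> v"
            using v \<open>a \<in> K\<close> by (auto simp: chamber_def inner_commute order_le_less)
          then show ?thesis
            using elim(2) \<open>a \<in> K\<close> by (auto simp: inner_commute)
        qed
      qed
    qed
    moreover have "y - v \<in> polar_cone (N \<union> uminus ` ?J) \<longleftrightarrow>
        y - v \<in> polar_cone N \<and> (\<forall>a\<in>?J. 0 \<le> a \<bullet> (y - v))"
      by (simp add: polar_cone_Un mem_polar_cone_uminus_image)
    ultimately show ?case
      using elim(1) by blast
  qed
qed

lemma simple_system_inner_nonpos: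
  fixes R S :: "'a::euclidean_space set"
  assumes "reduced_root_system R" "simple_system R S" "\<alpha> \<in> S" "\<beta> \<in> S" "\<alpha> \<noteq> \<beta>"
  shows "\<alpha> \<bullet> \<beta> \<le> 0"
proof (rule ccontr)
  assume "\<not> \<alpha> \<bullet> \<beta> \<le> 0"
  have "S \<subseteq> R" "independent S" and signs: "\<forall>b\<in>R. \<exists>c. b = (\<Sum>a\<in>S. c a *\<^sub>R a) \<and>
      ((\<forall>a\<in>S. 0 \<le> c a) \<or> (\<forall>a\<in>S. c a \<le> 0))"
    using assms(2) by (auto simp: simple_system_def)
  have "finite S"
    using independent_bound[OF \<open>independent S\<close>] by blast
  define k where "k = 2 * (\<beta> \<bullet> \<alpha>) / (\<alpha> \<bullet> \<alpha>)"
  have "0 < \<alpha> \<bullet> \<beta>"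
    using \<open>\<not> \<alpha> \<bullet> \<beta> \<le> 0\<close> by simp
  moreover have "\<alpha> \<noteq> 0"
    using calculation by auto
  ultimately have "0 < k"
    by (simp add: k_def inner_commute)
  have "\<alpha> \<in> R" "\<beta> \<in> R"
    using \<open>S \<subseteq> R\<close> assms(3,4) by auto
  then have "refl_in \<alpha> \<beta> \<in> R"
    using assms(1) by (simp add: reduced_root_system_def)
  then obtain c where c: "refl_in \<alpha> \<beta> = (\<Sum>a\<in>S. c a *\<^sub>R a)"
    and c_signs: "(\<forall>a\<in>S. 0 \<le> c a) \<or> (\<forall>a\<in>S. c a \<le> 0)"
    using signs by blast
  define d where "d a = (if a = \<beta> then 1 else if a = \<alpha> then - k else 0)" for a
  have "(\<Sum>a\<in>S. d a *\<^sub>R a) = \<beta> - k *\<^sub>R \<alpha>"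
    using \<open>finite S\<close> assms(3-5)
    by (simp add: d_def if_distrib[of "\<lambda>t. t *\<^sub>R _"] sum.If_cases Int_absorb1)
  also have "\<dots> = refl_in \<alpha> \<beta>"
    by (simp add: refl_in_def k_def)
  finally have "(\<Sum>a\<in>S. (c a - d a) *\<^sub>R a) = 0"
    by (simp add: c scaleR_left_diff_distrib sum_subtractf)
  then have "c a = d a" if "a \<in> S" for a
    using independentD[OF \<open>independent S\<close> \<open>finite S\<close> subset_refl, where u = "\<lambda>a. c a - d a"] that
    by simp
  then have "c \<beta> = 1" "c \<alpha> = - k"
    using assms(3-5) by (auto simp: d_def)
  then show False
    using c_signs assms(3,4) \<open>0 < k\<close> by force
qed

lemma refl_in_mem_convex_hull_orbit:
  assumes "a \<in> S" "x \<in> convex hull (\<Union>w\<in>refl_group S. w ` \<Lambda>)"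
  shows "refl_in a x \<in> convex hull (\<Union>w\<in>refl_group S. w ` \<Lambda>)"
proof -
  let ?O = "\<Union>w\<in>refl_group S. w ` \<Lambda>"
  have "refl_in a ` ?O \<subseteq> ?O"
  proof clarify
    fix w y assume "w \<in> refl_group S" "y \<in> \<Lambda>"
    then have "refl_in a \<circ> w \<in> refl_group S"
      using \<open>a \<in> S\<close> by (intro refl_group.step)
    then show "refl_in a (w y) \<in> ?O"
      using \<open>y \<in> \<Lambda>\<close> by (intro UN_I[of "refl_in a \<circ> w"]) auto
  qed
  then have "refl_in a ` (convex hull ?O) \<subseteq> convex hull ?O"
    by (simp add: convex_hull_linear_image[OF linear_refl_in] hull_mono)
  then show ?thesis
    using assms(2) by blast
qed

lemma simple_vertex_Int_chamber:
  fixes P :: "'a::euclidean_space set"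
  assumes dim: "DIM('a) = 3" and poly: "polytope P" and affP: "aff_dim P = 3"
    and simple: "\<And>u. u extreme_point_of P \<Longrightarrow> card {F. F facet_of P \<and> u \<in> F} = 3"
    and inv: "\<And>a x. a \<in> K \<Longrightarrow> x \<in> P \<Longrightarrow> refl_in a x \<in> P"
    and indK: "independent K" and obtuse: "\<And>a b. a \<in> K \<Longrightarrow> b \<in> K \<Longrightarrow> a \<noteq> b \<Longrightarrow> a \<bullet> b \<le> 0"
    and v: "v extreme_point_of (P \<inter> chamber K)"
  shows "card {F. F facet_of (P \<inter> chamber K) \<and> v \<in> F} = 3 \<and> aff_dim (P \<inter> chamber K) = 3"
proof -
  let ?N = "facet_normals P v" and ?J = "{a \<in> K. v \<bullet> a = 0}"
  have "finite K"
    using independent_bound[OF indK] by blast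
  have "v \<in> P" "v \<in> chamber K"
    using v by (auto simp: extreme_point_of_def)
  have polyh: "polyhedron P"
    using poly by (rule polytope_imp_polyhedron)
  have affP': "aff_dim P = DIM('a)"
    using affP dim by simp
  have cone: "local_cone (P \<inter> chamber K) v (?N \<union> uminus ` ?J)"
    using local_cone_Int_chamber[OF local_cone_facet_normals[OF polyh affP' \<open>v \<in> P\<close>]
        \<open>v \<in> chamber K\<close> \<open>finite K\<close>] .
  have indN: "independent ?N"
    using independent_facet_normals[OF poly affP' _ \<open>v \<in> P\<close>] simple dim by simp
  have indJ: "independent ?J"
    using indK by (rule independent_mono) auto
  have permute: "refl_in a ` ?N = ?N" if "a \<in> ?J" for a
    using that inv by (intro refl_in_facet_normals) auto
  obtain G where "finite G" "card G \<le> 3" and G: "polar_cone G = polar_cone (?N \<union> uminus ` ?J)"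
    using polar_cone_eq_three_generators[OF dim indN indJ _ permute] obtuse by auto
  then have coneG: "local_cone (P \<inter> chamber K) v G"
    using cone by (simp add: local_cone_def)
  then have "span G = UNIV"
    by (rule span_eq_UNIV_if_local_cone[OF v])
  then have "3 \<le> card G"
    using span_card_ge_dim[of G UNIV] \<open>finite G\<close> dim by simp
  then have "card G = 3"
    using \<open>card G \<le> 3\<close> by simp
  then have "independent G"
    using card_eq_dim[of G UNIV] \<open>span G = UNIV\<close> \<open>finite G\<close> dim by simp
  moreover have "polyhedron (P \<inter> chamber K)"
    using polyh polyhedron_chamber[OF \<open>finite K\<close>] by (rule polyhedron_Int)
  ultimately show ?thesis
    using facets_at_simplicial_vertex[OF _ _ coneG] \<open>card G = 3\<close> \<open>v \<in> P\<close> \<open>v \<in> chamber K\<close> dim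
    by simp
qed

lemma convex_hull_orbit_Int_chamber_nonempty:
  assumes "\<Lambda> \<subseteq> chamber S" "K \<subseteq> S" "convex hull (\<Union>w\<in>refl_group S. w ` \<Lambda>) \<noteq> {}"
  shows "convex hull (\<Union>w\<in>refl_group S. w ` \<Lambda>) \<inter> chamber K \<noteq> {}"
proof -
  obtain l where "l \<in> \<Lambda>"
    using assms(3) by fastforce
  then have "l \<in> convex hull (\<Union>w\<in>refl_group S. w ` \<Lambda>)"
    using refl_group.id by (intro hull_inc UN_I[of id]) auto
  moreover have "l \<in> chamber K"
    using \<open>l \<in> \<Lambda>\<close> assms(1,2) by (auto simp: chamber_def)
  ultimately show ?thesis
    by blast
qed

lemma simple_polytope3I:
  assumes "polytope Q" "Q \<noteq> {}"
    and "\<And>v. v extreme_point_of Q \<Longrightarrow> card {F. F facet_of Q \<and> v \<in> F} = 3 \<and> aff_dim Q = 3"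
  shows "simple_polytope3 Q"
proof -
  obtain v where "v extreme_point_of Q"
    using extreme_point_exists_convex polytope_imp_compact polytope_imp_convex assms(1,2) by metis
  then show ?thesis
    using assms by (auto simp: simple_polytope3_def)
qed

theorem lemma6p3:
  fixes R S :: "'a::euclidean_space set" and \<Lambda> :: "'a set"
  assumes "DIM('a) = 3"
    and "reduced_root_system R"
    and "simple_system R S"
    and "finite \<Lambda>" and "\<Lambda> \<subseteq> chamber S"
    and "P = convex hull (\<Union>w\<in>refl_group S. w ` \<Lambda>)"
    and "aff_dim P = 3"
    and "simple_polytope3 P"
  shows "\<forall>K\<subseteq>S. simple_polytope3 (P \<inter> chamber K)"
proof (intro allI impI)
  fix K assume "K \<subseteq> S"
  have poly: "polytope P" and simple: "\<And>u. u extreme_point_of P \<Longrightarrow> card {F. F facet_of P \<and> u \<in> F} = 3"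
    using assms(8) by (auto simp: simple_polytope3_def)
  have "independent S"
    using assms(3) by (simp add: simple_system_def)
  then have indK: "independent K"
    using \<open>K \<subseteq> S\<close> by (rule independent_mono)
  have inv: "refl_in a x \<in> P" if "a \<in> K" "x \<in> P" for a x
    using refl_in_mem_convex_hull_orbit[of a S x \<Lambda>] that \<open>K \<subseteq> S\<close> assms(6) by blast
  have obtuse: "a \<bullet> b \<le> 0" if "a \<in> K" "b \<in> K" "a \<noteq> b" for a b
    using simple_system_inner_nonpos[OF assms(2,3)] that \<open>K \<subseteq> S\<close> by blast
  have "polytope (P \<inter> chamber K)"
    using poly polyhedron_chamber[OF independent_bound[OF indK, THEN conjunct1]]
    by (rule polytope_Int_polyhedron)
  moreover have "P \<noteq> {}"
    using assms(7) by auto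
  then have "P \<inter> chamber K \<noteq> {}"
    using convex_hull_orbit_Int_chamber_nonempty[OF assms(5) \<open>K \<subseteq> S\<close>] assms(6) by simp
  ultimately show "simple_polytope3 (P \<inter> chamber K)"
    using simple_vertex_Int_chamber[OF assms(1) poly assms(7) simple inv indK obtuse]
    by (rule simple_polytope3I)
qed

end
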